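(* The affine hypersurface $Q\subset\mathbf{A}^4_{\mathbf{C}}$ with coordinates $(t,s,z,w)$ defined by $(w^3-1)(t^2-1)=(z^3-1)(s^2-1)$ is rational. *)

theory Defs
  imports "HOL-Analysis.Analysis"
begin

inductive polyfun :: "('a \<Rightarrow> complex) set \<Rightarrow> ('a \<Rightarrow> complex) \<Rightarrow> bool"
  for C :: "('a \<Rightarrow> complex) set" where
  pf_const: "polyfun C (\<lambda>x. c)"
| pf_var: "f \<in> C \<Longrightarrow> polyfun C f"
| pf_add: "polyfun C f \<Longrightarrow> polyfun C g \<Longrightarrow> polyfun C (\<lambda>x. f x + g x)"
| pf_mult: "polyfun C f \<Longrightarrow> polyfun C g \<Longrightarrow> polyfun C (\<lambda>x. f x * g x)"

definition affpoly :: "(complex^'n \<Rightarrow> complex) \<Rightarrow> bool" where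
  "affpoly p \<longleftrightarrow> polyfun (range (\<lambda>i x. x $ i)) p"

definition zariski_dense_in :: "(complex^'n) set \<Rightarrow> (complex^'n) set \<Rightarrow> bool" where
  "zariski_dense_in V X \<longleftrightarrow> V \<subseteq> X \<and>
     (\<forall>p. affpoly p \<longrightarrow> (\<forall>v\<in>V. p v = 0) \<longrightarrow> (\<forall>x\<in>X. p x = 0))"

text \<open>X \<subseteq> A^n is birational to affine space A^d: there are mutually inverse rational maps
  phi : A^d --> X (components a i / b i) and psi : X --> A^d (components c j / e j),
  with psi o phi = id on the nonempty Zariski open set D(g) of A^d (on which phi lands in X),
  and phi o psi = id on the Zariski-dense open subset X \<inter> D(h) of X.\<close>
definition birational_to_affine :: "(complex^'n) set \<Rightarrow> 'd::finite itself \<Rightarrow> bool" where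
  "birational_to_affine X (_ :: 'd itself) \<longleftrightarrow>
     (\<exists>(a :: 'n \<Rightarrow> complex^'d \<Rightarrow> complex) (b :: 'n \<Rightarrow> complex^'d \<Rightarrow> complex)
        (c :: 'd \<Rightarrow> complex^'n \<Rightarrow> complex) (e :: 'd \<Rightarrow> complex^'n \<Rightarrow> complex)
        (g :: complex^'d \<Rightarrow> complex) (h :: complex^'n \<Rightarrow> complex).
        (\<forall>i. affpoly (a i) \<and> affpoly (b i)) \<and> (\<forall>j. affpoly (c j) \<and> affpoly (e j)) \<and>
        affpoly g \<and> affpoly h \<and>
        (\<exists>u. g u \<noteq> 0) \<and> zariski_dense_in {x\<in>X. h x \<noteq> 0} X \<and>
        (\<forall>u. g u \<noteq> 0 \<longrightarrow>
            (\<forall>i. b i u \<noteq> 0) \<and> (\<chi> i. a i u / b i u) \<in> X \<and>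
            (\<forall>j. e j (\<chi> i. a i u / b i u) \<noteq> 0) \<and>
            (\<chi> j. c j (\<chi> i. a i u / b i u) / e j (\<chi> i. a i u / b i u)) = u) \<and>
        (\<forall>x\<in>X. h x \<noteq> 0 \<longrightarrow>
            (\<forall>j. e j x \<noteq> 0) \<and> (\<forall>i. b i (\<chi> j. c j x / e j x) \<noteq> 0) \<and>
            (\<chi> i. a i (\<chi> j. c j x / e j x) / b i (\<chi> j. c j x / e j x)) = x))"

end

theory Submission
  imports Defs "HOL-Computational_Algebra.Polynomial"
begin

text \<open>
  Over a point \<open>(z, w)\<close> the fibre of \<open>Q\<close> is the conic \<open>\<alpha>(t\<^sup>2 - 1) = \<beta>(s\<^sup>2 - 1)\<close> with
  \<open>\<alpha> = w\<^sup>3 - 1\<close>, \<open>\<beta> = z\<^sup>3 - 1\<close>, and all these conics pass through the four points \<open>(\<plusminus>1, \<plusminus>1)\<close>.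
  Projecting from \<open>(1, 1)\<close>, i.e. recording the slope \<open>m = (t - 1)/(s - 1)\<close>, gives a birational map
  \<open>Q \<rightarrow> \<^bold>A\<^sup>3\<close>, \<open>(t, s, z, w) \<mapsto> (m, z, w)\<close>, whose inverse sends \<open>m\<close> to the second intersection of the
  conic with the line of slope \<open>m\<close> through \<open>(1, 1)\<close>.

  The substantial point is that the locus where the projection is defined is Zariski dense in \<open>Q\<close>.
  It is even dense in the Euclidean topology: every point of \<open>Q\<close> is reached as a limit of such points
  along explicit curves, namely secants through the other base points, deformations of \<open>(z, w)\<close>
  that keep the slope fixed, and, over the fibres \<open>\<alpha> = \<beta> = 0\<close> (which lie entirely in \<open>Q\<close>), a
  rescaled deformation whose fibres tend to a nondegenerate conic through the given \<open>(t, s)\<close>.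
\<close>

section \<open>Polynomial functions\<close>

lemma polyfun_diff: "polyfun C f \<Longrightarrow> polyfun C g \<Longrightarrow> polyfun C (\<lambda>x. f x - g x)"
  using pf_add[OF _ pf_mult[OF pf_const[of C "-1"]], of f g] by simp

lemma polyfun_power: "polyfun C f \<Longrightarrow> polyfun C (\<lambda>x. f x ^ n)"
  by (induction n) (simp_all add: pf_mult pf_const[of C 1, simplified])

lemma polyfun_continuous_on:
  assumes "polyfun C f" "\<And>g. g \<in> C \<Longrightarrow> continuous_on UNIV g"
  shows "continuous_on UNIV f"
  using assms by (induction rule: polyfun.induct) (auto intro: continuous_on_add continuous_on_mult)

lemma affpoly_continuous_on: "affpoly p \<Longrightarrow> continuous_on UNIV p"
  unfolding affpoly_def by (erule polyfun_continuous_on) (auto intro: continuous_on_component)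

lemma affpoly_const: "affpoly (\<lambda>x. c)"
  and affpoly_component: "affpoly (\<lambda>x. x $ i)"
  and affpoly_add: "affpoly f \<Longrightarrow> affpoly g \<Longrightarrow> affpoly (\<lambda>x. f x + g x)"
  and affpoly_mult: "affpoly f \<Longrightarrow> affpoly g \<Longrightarrow> affpoly (\<lambda>x. f x * g x)"
  and affpoly_diff: "affpoly f \<Longrightarrow> affpoly g \<Longrightarrow> affpoly (\<lambda>x. f x - g x)"
  and affpoly_uminus: "affpoly f \<Longrightarrow> affpoly (\<lambda>x. - f x)"
  and affpoly_power: "affpoly f \<Longrightarrow> affpoly (\<lambda>x. f x ^ n)"
  unfolding affpoly_def
  by (auto intro: polyfun.intros polyfun_diff polyfun_power polyfun_diff[OF pf_const[of _ 0], simplified])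

lemma affpoly_if: "affpoly f \<Longrightarrow> affpoly g \<Longrightarrow> affpoly (\<lambda>x. if P then f x else g x)"
  by (cases P) simp_all

lemmas affpoly_intros =
  affpoly_const affpoly_component affpoly_add affpoly_mult affpoly_diff affpoly_uminus affpoly_power
  affpoly_if

section \<open>Secants of the conics \<open>\<alpha>(t\<^sup>2 - 1) = \<beta>(s\<^sup>2 - 1)\<close>\<close>

text \<open>The line through the base point \<open>(a, b)\<close>, \<open>a\<^sup>2 = b\<^sup>2 = 1\<close>, with direction \<open>(m, 1)\<close> meets the conic
  again at \<open>(a + m r, b + r)\<close> with \<open>r = secant_step \<alpha> \<beta> a b m\<close>, the nonzero root of
  \<open>r ((\<alpha> m\<^sup>2 - \<beta>) r - 2 (b \<beta> - a \<alpha> m)) = 0\<close>.\<close>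
definition secant_step :: "'a::field \<Rightarrow> 'a \<Rightarrow> 'a \<Rightarrow> 'a \<Rightarrow> 'a \<Rightarrow> 'a" where
  "secant_step \<alpha> \<beta> a b m = 2 * (b * \<beta> - a * \<alpha> * m) / (\<alpha> * m^2 - \<beta>)"

definition secant_t :: "'a::field \<Rightarrow> 'a \<Rightarrow> 'a \<Rightarrow> 'a \<Rightarrow> 'a \<Rightarrow> 'a" where
  "secant_t \<alpha> \<beta> a b m = a + m * secant_step \<alpha> \<beta> a b m"

definition secant_s :: "'a::field \<Rightarrow> 'a \<Rightarrow> 'a \<Rightarrow> 'a \<Rightarrow> 'a \<Rightarrow> 'a" where
  "secant_s \<alpha> \<beta> a b m = b + secant_step \<alpha> \<beta> a b m"

lemma secant_step_eq_iff:
  assumes "\<alpha> * m^2 \<noteq> \<beta>"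
  shows "secant_step \<alpha> \<beta> a b m = r \<longleftrightarrow> r * (\<alpha> * m^2 - \<beta>) = 2 * (b * \<beta> - a * \<alpha> * m)"
  using assms by (auto simp: secant_step_def field_simps)

lemma secant_on_conic:
  assumes "a^2 = 1" "b^2 = 1" "\<alpha> * m^2 \<noteq> \<beta>"
  shows "\<alpha> * ((secant_t \<alpha> \<beta> a b m)^2 - 1) = \<beta> * ((secant_s \<alpha> \<beta> a b m)^2 - 1)"
proof -
  define r where "r = secant_step \<alpha> \<beta> a b m"
  have r: "r * (\<alpha> * m^2 - \<beta>) = 2 * (b * \<beta> - a * \<alpha> * m)"
    using secant_step_eq_iff[OF assms(3)] r_def by blast
  have "\<alpha> * ((a + m * r)^2 - 1) - \<beta> * ((b + r)^2 - 1)
      = r * (r * (\<alpha> * m^2 - \<beta>) - 2 * (b * \<beta> - a * \<alpha> * m))"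
    using assms(1,2) by (simp add: algebra_simps power2_eq_square)
  then show ?thesis
    unfolding secant_t_def secant_s_def r_def[symmetric] r by simp
qed

lemma secant_slope:
  assumes "secant_step \<alpha> \<beta> a b m \<noteq> 0"
  shows "secant_s \<alpha> \<beta> a b m \<noteq> b" and "(secant_t \<alpha> \<beta> a b m - a) / (secant_s \<alpha> \<beta> a b m - b) = m"
  using assms by (simp_all add: secant_t_def secant_s_def)

lemma secant_through_point:
  assumes conic: "\<alpha> * (t^2 - 1) = \<beta> * (s^2 - 1)" and "a^2 = 1" "b^2 = 1" and "s \<noteq> b"
    and nontangent: "\<alpha> * (t - a)^2 \<noteq> \<beta> * (s - b)^2"
  defines "m \<equiv> (t - a) / (s - b)"
  shows "\<alpha> * m^2 \<noteq> \<beta>" and "secant_t \<alpha> \<beta> a b m = t" and "secant_s \<alpha> \<beta> a b m = s"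
proof -
  define r where "r = s - b"
  have r0: "r \<noteq> 0" and t: "t = a + m * r" using \<open>s \<noteq> b\<close> by (simp_all add: r_def m_def)
  have "\<alpha> * m^2 - \<beta> = (\<alpha> * (t - a)^2 - \<beta> * (s - b)^2) / r^2"
    using r0 by (simp add: m_def r_def field_simps)
  then show D: "\<alpha> * m^2 \<noteq> \<beta>" using nontangent r0 by auto
  have "r * (r * (\<alpha> * m^2 - \<beta>) - 2 * (b * \<beta> - a * \<alpha> * m))
      = \<alpha> * ((a + m * r)^2 - 1) - \<beta> * ((b + r)^2 - 1)"
    using assms(2,3) by (simp add: algebra_simps power2_eq_square)
  also have "\<dots> = 0" using conic by (simp add: t r_def)
  finally have "secant_step \<alpha> \<beta> a b m = r"
    using r0 secant_step_eq_iff[OF D] by simp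
  then show "secant_t \<alpha> \<beta> a b m = t" "secant_s \<alpha> \<beta> a b m = s"
    by (simp_all add: secant_t_def secant_s_def t r_def)
qed

lemma exists_secant_base:
  fixes \<alpha> \<beta> t s :: "'a::field_char_0"
  assumes conic: "\<alpha> * (t^2 - 1) = \<beta> * (s^2 - 1)" and "\<alpha> \<noteq> 0 \<or> \<beta> \<noteq> 0" and "t \<noteq> 0 \<or> s \<noteq> 0"
  shows "\<exists>a b. a^2 = 1 \<and> b^2 = 1 \<and> s \<noteq> b \<and> \<alpha> * (t - a)^2 \<noteq> \<beta> * (s - b)^2"
proof (rule ccontr)
  assume none: "\<not> ?thesis"
  define b :: 'a where "b = (if s = 1 then -1 else 1)"
  have b2: "b^2 = 1" and sb: "s \<noteq> b" by (auto simp: b_def)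
  have "\<alpha> * (t - a)^2 = \<beta> * (s - b)^2" if "a^2 = 1" for a
    using none b2 sb that by blast
  from this[of 1] this[of "-1"]
  have e1: "\<alpha> * (t - 1)^2 = \<beta> * (s - b)^2" and e2: "\<alpha> * (t + 1)^2 = \<beta> * (s - b)^2"
    by simp_all
  have "4 * \<alpha> * t = \<alpha> * (t + 1)^2 - \<alpha> * (t - 1)^2"
    by (simp add: algebra_simps power2_eq_square)
  then have "4 * \<alpha> * t = 0" using e1 e2 by simp
  moreover have "\<alpha> \<noteq> 0"
    using e1 sb assms(2) by auto
  ultimately have t: "t = 0" by simp
  with e1 have \<alpha>: "\<alpha> = \<beta> * (s - b)^2" by simp
  with \<open>\<alpha> \<noteq> 0\<close> have "\<beta> \<noteq> 0" by auto
  have "\<beta> * (2 * s * (s - b)) = \<beta> * ((s - b)^2 + (s^2 - 1))"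
    using b2 by (simp add: algebra_simps power2_eq_square)
  also have "\<dots> = 0" using conic by (simp add: t \<alpha> algebra_simps)
  finally have "s = 0" using \<open>\<beta> \<noteq> 0\<close> sb by simp
  with t assms(3) show False by simp
qed

lemma generic_conic_exceptional_points:
  fixes \<alpha> \<beta> t s :: "'a::field_char_0"
  assumes conic: "\<alpha> * (t^2 - 1) = \<beta> * (s^2 - 1)" and "\<alpha> \<noteq> 0" "\<beta> \<noteq> 0" "\<alpha> \<noteq> \<beta>"
    and exceptional: "s = 1 \<or> \<alpha> * (t - 1)^2 = \<beta> * (s - 1)^2"
  shows "s = 1 \<and> t^2 = 1"
proof -
  have "s = 1"
  proof (rule ccontr)
    assume s1: "s \<noteq> 1"
    with exceptional have e2: "\<alpha> * (t - 1)^2 = \<beta> * (s - 1)^2" by simp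
    with s1 \<open>\<beta> \<noteq> 0\<close> have t1: "t \<noteq> 1" by auto
    have e1: "\<alpha> * (t - 1) * (t + 1) = \<beta> * (s - 1) * (s + 1)"
      using conic by (simp add: algebra_simps power2_eq_square)
    have "\<beta> * (s - 1) * ((s + 1) * (t - 1) - (t + 1) * (s - 1))
        = (t - 1) * (\<beta> * (s - 1) * (s + 1)) - (t + 1) * (\<beta> * (s - 1)^2)"
      by (simp add: algebra_simps power2_eq_square)
    also have "\<dots> = (t - 1) * (\<alpha> * (t - 1) * (t + 1)) - (t + 1) * (\<alpha> * (t - 1)^2)"
      by (simp only: e1 e2)
    also have "\<dots> = 0" by (simp add: algebra_simps power2_eq_square)
    finally have "\<beta> * (s - 1) * ((s + 1) * (t - 1) - (t + 1) * (s - 1)) = 0" .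
    then have "(s + 1) * (t - 1) = (t + 1) * (s - 1)" using s1 \<open>\<beta> \<noteq> 0\<close> by simp
    then have "t = s" by (simp add: algebra_simps)
    with e2 s1 \<open>\<alpha> \<noteq> \<beta>\<close> show False by simp
  qed
  with conic \<open>\<alpha> \<noteq> 0\<close> show ?thesis by simp
qed

lemma secant_from_1_neg1_nonexceptional:
  fixes \<alpha> \<beta> m :: "'a::field_char_0"
  assumes "\<alpha> \<noteq> 0" "\<alpha> \<noteq> \<beta>" "m \<noteq> 0" "m \<noteq> -1" "\<alpha> * m^2 \<noteq> \<beta>"
  shows "secant_s \<alpha> \<beta> 1 (-1) m \<noteq> 1"
    and "\<alpha> * (secant_t \<alpha> \<beta> 1 (-1) m - 1)^2 \<noteq> \<beta> * (secant_s \<alpha> \<beta> 1 (-1) m - 1)^2"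
proof -
  define D where "D = \<alpha> * m^2 - \<beta>"
  define r where "r = secant_step \<alpha> \<beta> 1 (-1) m"
  have D: "D \<noteq> 0" using assms(5) by (simp add: D_def)
  have "r * D = 2 * (- 1 * \<beta> - 1 * \<alpha> * m)"
    using secant_step_eq_iff[OF assms(5), of 1 "-1" r] r_def D_def by blast
  also have "\<dots> = - 2 * (\<beta> + \<alpha> * m)" by (simp add: algebra_simps)
  finally have rD: "r * D = - 2 * (\<beta> + \<alpha> * m)" .
  have t: "secant_t \<alpha> \<beta> 1 (-1) m = 1 + m * r" and s: "secant_s \<alpha> \<beta> 1 (-1) m = r - 1"
    by (simp_all add: secant_t_def secant_s_def r_def)
  have "(r - 2) * D = r * D - 2 * D" by (simp add: algebra_simps)
  also have "\<dots> = - 2 * (\<beta> + \<alpha> * m) - 2 * D" by (simp only: rD)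
  also have "\<dots> = - 2 * \<alpha> * m * (m + 1)" by (simp add: D_def algebra_simps power2_eq_square)
  finally have sD: "(r - 2) * D = - 2 * \<alpha> * m * (m + 1)" .
  have "m + 1 \<noteq> 0" using assms(4) eq_neg_iff_add_eq_0[of m 1] by simp
  then have "- 2 * \<alpha> * m * (m + 1) \<noteq> 0" using assms(1,3) by simp
  with sD have "r - 2 \<noteq> 0" by auto
  then show "secant_s \<alpha> \<beta> 1 (-1) m \<noteq> 1" by (simp add: s)
  have "(\<alpha> * (m * r)^2 - \<beta> * (r - 2)^2) * D^2 = \<alpha> * m^2 * (r * D)^2 - \<beta> * ((r - 2) * D)^2"
    by (simp add: algebra_simps power2_eq_square)
  also have "\<dots> = 4 * \<alpha> * m^2 * (\<alpha> - \<beta>) * D"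
    unfolding rD sD by (simp add: D_def algebra_simps power2_eq_square)
  also have "\<dots> \<noteq> 0" using D assms(1-3) by simp
  finally have "\<alpha> * (m * r)^2 - \<beta> * (r - 2)^2 \<noteq> 0" by simp
  then show "\<alpha> * (secant_t \<alpha> \<beta> 1 (-1) m - 1)^2 \<noteq> \<beta> * (secant_s \<alpha> \<beta> 1 (-1) m - 1)^2"
    by (simp add: t s)
qed

lemma tendsto_secant:
  fixes \<alpha> \<beta> m :: "'a::real_normed_field"
  assumes "(A \<longlongrightarrow> \<alpha>) F" "(B \<longlongrightarrow> \<beta>) F" "(M \<longlongrightarrow> m) F" and "\<alpha> * m^2 \<noteq> \<beta>"
  shows "((\<lambda>x. secant_t (A x) (B x) a b (M x)) \<longlongrightarrow> secant_t \<alpha> \<beta> a b m) F"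
    and "((\<lambda>x. secant_s (A x) (B x) a b (M x)) \<longlongrightarrow> secant_s \<alpha> \<beta> a b m) F"
  unfolding secant_t_def secant_s_def secant_step_def
  by (intro tendsto_intros assms(1-3) | use assms(4) in simp)+

section \<open>The hypersurface and the birational maps\<close>

definition vec4 :: "'a \<Rightarrow> 'a \<Rightarrow> 'a \<Rightarrow> 'a \<Rightarrow> 'a^4" where
  "vec4 t s z w = (\<chi> i. if i = 1 then t else if i = 2 then s else if i = 3 then z else w)"

lemma vec4_nth [simp]:
  "vec4 t s z w $ 1 = t" "vec4 t s z w $ 2 = s" "vec4 t s z w $ 3 = z" "vec4 t s z w $ 4 = w"
  by (simp_all add: vec4_def)

lemma vec4_eta: "vec4 (x$1) (x$2) (x$3) (x$4) = x"
  by (simp add: vec_eq_iff forall_4)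

lemma tendsto_vec4:
  assumes "(T \<longlongrightarrow> t) F" "(S \<longlongrightarrow> s) F" "(Z \<longlongrightarrow> z) F" "(W \<longlongrightarrow> w) F"
  shows "((\<lambda>l. vec4 (T l) (S l) (Z l) (W l)) \<longlongrightarrow> vec4 t s z w) F"
proof (rule vec_tendstoI)
  fix i :: 4
  show "((\<lambda>l. vec4 (T l) (S l) (Z l) (W l) $ i) \<longlongrightarrow> vec4 t s z w $ i) F"
    using exhaust_4[of i] assms by auto
qed

definition hypersurface_Q :: "(complex^4) set" where
  "hypersurface_Q = {x. ((x$4)^3 - 1) * ((x$1)^2 - 1) = ((x$3)^3 - 1) * ((x$2)^2 - 1)}"

lemma vec4_in_hypersurface_Q [simp]:
  "vec4 t s z w \<in> hypersurface_Q \<longleftrightarrow> (w^3 - 1) * (t^2 - 1) = (z^3 - 1) * (s^2 - 1)"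
  by (simp add: hypersurface_Q_def)

definition psi_nondeg :: "complex^4 \<Rightarrow> complex" where
  "psi_nondeg x = (x$2 - 1) * (((x$4)^3 - 1) * (x$1 - 1)^2 - ((x$3)^3 - 1) * (x$2 - 1)^2)"

lemma psi_nondeg_vec4_eq_0_iff [simp]:
  "psi_nondeg (vec4 t s z w) = 0 \<longleftrightarrow> s = 1 \<or> (w^3 - 1) * (t - 1)^2 = (z^3 - 1) * (s - 1)^2"
  by (simp add: psi_nondeg_def)

definition phi_num :: "4 \<Rightarrow> complex^3 \<Rightarrow> complex" where
  "phi_num i u = (let m = u$1; z = u$2; w = u$3; \<alpha> = w^3 - 1; \<beta> = z^3 - 1 in
     if i = 1 then - \<alpha> * m^2 + 2 * \<beta> * m - \<beta>
     else if i = 2 then \<alpha> * m^2 - 2 * \<alpha> * m + \<beta>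
     else if i = 3 then z else w)"

definition phi_den :: "4 \<Rightarrow> complex^3 \<Rightarrow> complex" where
  "phi_den i u = (if i = 1 \<or> i = 2 then (u$3^3 - 1) * (u$1)^2 - (u$2^3 - 1) else 1)"

definition phi_nondeg :: "complex^3 \<Rightarrow> complex" where
  "phi_nondeg u = ((u$3^3 - 1) * (u$1)^2 - (u$2^3 - 1)) * ((u$2^3 - 1) - (u$3^3 - 1) * u$1)"

definition psi_num :: "3 \<Rightarrow> complex^4 \<Rightarrow> complex" where
  "psi_num j x = (if j = 1 then x$1 - 1 else if j = 2 then x$3 else x$4)"

definition psi_den :: "3 \<Rightarrow> complex^4 \<Rightarrow> complex" where
  "psi_den j x = (if j = 1 then x$2 - 1 else 1)"

lemma phi_psi_affpoly:
  "affpoly (phi_num i)" "affpoly (phi_den i)" "affpoly (psi_num j)" "affpoly (psi_den j)"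
  "affpoly phi_nondeg" "affpoly psi_nondeg"
  unfolding phi_num_def phi_den_def psi_num_def psi_den_def phi_nondeg_def psi_nondeg_def Let_def
  by (auto intro!: affpoly_intros)

lemma phi_as_secant:
  fixes u :: "complex^3"
  defines "\<alpha> \<equiv> u$3^3 - 1" and "\<beta> \<equiv> u$2^3 - 1"
  assumes "\<alpha> * (u$1)^2 \<noteq> \<beta>"
  shows "\<forall>i. phi_den i u \<noteq> 0"
    and "(\<chi> i. phi_num i u / phi_den i u) =
           vec4 (secant_t \<alpha> \<beta> 1 1 (u$1)) (secant_s \<alpha> \<beta> 1 1 (u$1)) (u$2) (u$3)"
proof -
  show "\<forall>i. phi_den i u \<noteq> 0" using assms(3) by (simp add: phi_den_def \<alpha>_def \<beta>_def)
  show "(\<chi> i. phi_num i u / phi_den i u) =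
           vec4 (secant_t \<alpha> \<beta> 1 1 (u$1)) (secant_s \<alpha> \<beta> 1 1 (u$1)) (u$2) (u$3)"
    unfolding vec_eq_iff forall_4 using assms(3)
    by (simp add: phi_num_def phi_den_def Let_def secant_t_def secant_s_def secant_step_def
        \<alpha>_def[symmetric] \<beta>_def[symmetric] field_simps power2_eq_square)
qed

lemma psi_vec4:
  assumes "s \<noteq> 1"
  shows "\<forall>j. psi_den j (vec4 t s z w) \<noteq> 0"
    and "(\<chi> j. psi_num j (vec4 t s z w) / psi_den j (vec4 t s z w)) =
           vector [(t - 1) / (s - 1), z, w]"
  using assms by (auto simp: psi_num_def psi_den_def vec_eq_iff forall_3)

lemma psi_phi_id:
  assumes "phi_nondeg u \<noteq> 0"
  shows "(\<forall>i. phi_den i u \<noteq> 0) \<and> (\<chi> i. phi_num i u / phi_den i u) \<in> hypersurface_Q \<and>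
    (\<forall>j. psi_den j (\<chi> i. phi_num i u / phi_den i u) \<noteq> 0) \<and>
    (\<chi> j. psi_num j (\<chi> i. phi_num i u / phi_den i u) / psi_den j (\<chi> i. phi_num i u / phi_den i u)) = u"
proof -
  define \<alpha> \<beta> m where "\<alpha> = u$3^3 - 1" and "\<beta> = u$2^3 - 1" and "m = u$1"
  have D: "\<alpha> * m^2 \<noteq> \<beta>" and "\<beta> - \<alpha> * m \<noteq> 0"
    using assms by (simp_all add: phi_nondeg_def \<alpha>_def \<beta>_def m_def)
  then have step: "secant_step \<alpha> \<beta> 1 1 m \<noteq> 0" by (simp add: secant_step_def)
  note phi = phi_as_secant[of u, folded \<alpha>_def \<beta>_def m_def, OF D]
  note slope = secant_slope[OF step]
  have "vec4 (secant_t \<alpha> \<beta> 1 1 m) (secant_s \<alpha> \<beta> 1 1 m) (u$2) (u$3) \<in> hypersurface_Q"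
    using secant_on_conic[of 1 1 \<alpha> m \<beta>] D by (simp add: \<alpha>_def \<beta>_def)
  moreover have "vector [m, u$2, u$3] = u"
    by (simp add: vec_eq_iff forall_3 m_def)
  ultimately show ?thesis
    unfolding phi(2) psi_vec4(2)[OF slope(1)] slope(2) using phi(1) psi_vec4(1)[OF slope(1)] by simp
qed

lemma phi_psi_id:
  assumes "x \<in> hypersurface_Q" "psi_nondeg x \<noteq> 0"
  shows "(\<forall>j. psi_den j x \<noteq> 0) \<and> (\<forall>i. phi_den i (\<chi> j. psi_num j x / psi_den j x) \<noteq> 0) \<and>
    (\<chi> i. phi_num i (\<chi> j. psi_num j x / psi_den j x) / phi_den i (\<chi> j. psi_num j x / psi_den j x)) = x"
proof -
  obtain t s z w where x: "x = vec4 t s z w" by (metis vec4_eta)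
  define \<alpha> \<beta> m where "\<alpha> = w^3 - 1" and "\<beta> = z^3 - 1" and "m = (t - 1) / (s - 1)"
  have conic: "\<alpha> * (t^2 - 1) = \<beta> * (s^2 - 1)" and s: "s \<noteq> 1"
    and nontangent: "\<alpha> * (t - 1)^2 \<noteq> \<beta> * (s - 1)^2"
    using assms by (simp_all add: x \<alpha>_def \<beta>_def)
  note secant = secant_through_point[OF conic _ _ s nontangent, folded m_def, simplified]
  note psi = psi_vec4[OF s, of t z w, folded m_def]
  show ?thesis
    unfolding x psi(2) using psi(1) phi_as_secant[of "vector [m, z, w]"] secant
    by (simp add: \<alpha>_def \<beta>_def)
qed

section \<open>Density of the domain of the projection\<close>

lemma eventually_linear_powers_ne:
  fixes x y c d e :: "'a::real_normed_field"
  assumes "c^n \<noteq> d^n"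
  shows "\<forall>\<^sub>F l in at z. (x + c * l)^n - (y + d * l)^n \<noteq> e"
proof -
  define q where "q = [:x, c:]^n - [:y, d:]^n - [:e:]"
  have "n \<noteq> 0" using assms by (metis power_0)
  then have "coeff q n = c^n - d^n"
    by (simp add: q_def coeff_linear_poly_power coeff_pCons split: nat.split)
  then have "q \<noteq> 0" using assms by auto
  then have "finite {l. poly q l = 0}" by (rule poly_roots_finite)
  then have "\<forall>\<^sub>F l in at z. \<forall>y\<in>{l. poly q l = 0}. l \<noteq> y"
    by (rule eventually_ball_finite) (auto intro: eventually_neq_at_within)
  then have "\<forall>\<^sub>F l in at z. poly q l \<noteq> 0" by eventually_elim blast
  moreover have "poly q l = 0 \<longleftrightarrow> (x + c * l)^n - (y + d * l)^n = e" for l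
    by (auto simp: q_def algebra_simps)
  ultimately show ?thesis by simp
qed

lemma cube_root_of_unity_deformation:
  fixes w c l :: "'a::field_char_0"
  assumes "w^3 = 1"
  shows "(w * (1 + c * l / 3))^3 - 1 = l * (c + c^2 * l / 3 + c^3 * l^2 / 27)"
proof -
  have "(w * (1 + c * l / 3))^3 - 1 = (1 + c * l / 3)^3 - 1" using assms by (simp add: power_mult_distrib)
  also have "\<dots> = l * (c + c^2 * l / 3 + c^3 * l^2 / 27)"
    by (simp add: field_simps power3_eq_cube power2_eq_square)
  finally show ?thesis .
qed

context
  fixes p :: "complex^4 \<Rightarrow> complex"
  assumes p_continuous: "continuous_on UNIV p"
    and p_vanishes: "\<And>x. x \<in> hypersurface_Q \<Longrightarrow> psi_nondeg x \<noteq> 0 \<Longrightarrow> p x = 0"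
begin

lemma vanishes_at_limit:
  fixes c :: complex
  assumes "(T \<longlongrightarrow> t) (at c)" "(S \<longlongrightarrow> s) (at c)" "(Z \<longlongrightarrow> z) (at c)" "(W \<longlongrightarrow> w) (at c)"
    and "\<forall>\<^sub>F l in at c. p (vec4 (T l) (S l) (Z l) (W l)) = 0"
  shows "p (vec4 t s z w) = 0"
proof -
  have "closed {x. p x = 0}" by (rule closed_Collect_eq[OF p_continuous continuous_on_const])
  from Lim_in_closed_set[OF this _ at_neq_bot tendsto_vec4[OF assms(1-4)]] assms(5)
  show ?thesis by simp
qed

lemma vanishes_at_secant_from_1_neg1:
  fixes w z m :: complex
  defines "\<alpha> \<equiv> w^3 - 1" and "\<beta> \<equiv> z^3 - 1"
  assumes "\<alpha> \<noteq> 0" "\<alpha> \<noteq> \<beta>" and nontangent: "\<alpha> * m^2 \<noteq> \<beta>"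
  shows "p (vec4 (secant_t \<alpha> \<beta> 1 (-1) m) (secant_s \<alpha> \<beta> 1 (-1) m) z w) = 0"
proof (rule vanishes_at_limit)
  show "((\<lambda>n. secant_t \<alpha> \<beta> 1 (-1) n) \<longlongrightarrow> secant_t \<alpha> \<beta> 1 (-1) m) (at m)"
    "((\<lambda>n. secant_s \<alpha> \<beta> 1 (-1) n) \<longlongrightarrow> secant_s \<alpha> \<beta> 1 (-1) m) (at m)"
    using tendsto_secant[OF tendsto_const tendsto_const tendsto_ident_at nontangent] by simp_all
  have "((\<lambda>n. \<alpha> * n^2) \<longlongrightarrow> \<alpha> * m^2) (at m)" by (intro tendsto_intros)
  then have "\<forall>\<^sub>F n in at m. \<alpha> * n^2 \<noteq> \<beta>"
    using nontangent by (rule tendsto_imp_eventually_ne)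
  then show "\<forall>\<^sub>F n in at m. p (vec4 (secant_t \<alpha> \<beta> 1 (-1) n) (secant_s \<alpha> \<beta> 1 (-1) n) z w) = 0"
    using eventually_neq_at_within[of 0 m UNIV] eventually_neq_at_within[of "-1" m UNIV]
  proof eventually_elim
    case (elim n)
    show ?case
    proof (rule p_vanishes)
      show "vec4 (secant_t \<alpha> \<beta> 1 (-1) n) (secant_s \<alpha> \<beta> 1 (-1) n) z w \<in> hypersurface_Q"
        using secant_on_conic[of 1 "-1" \<alpha> n \<beta>] elim by (simp add: \<alpha>_def \<beta>_def)
      show "psi_nondeg (vec4 (secant_t \<alpha> \<beta> 1 (-1) n) (secant_s \<alpha> \<beta> 1 (-1) n) z w) \<noteq> 0"
        using secant_from_1_neg1_nonexceptional[of \<alpha> \<beta> n] elim assms(3,4)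
        by (simp add: \<alpha>_def \<beta>_def)
    qed
  qed
qed (rule tendsto_const)+

lemma vanishes_on_generic_fibres:
  assumes conic: "(w^3 - 1) * (t^2 - 1) = (z^3 - 1) * (s^2 - 1)"
    and "w^3 - 1 \<noteq> 0" "z^3 - 1 \<noteq> 0" "w^3 \<noteq> z^3"
  shows "p (vec4 t s z w) = 0"
proof (cases "psi_nondeg (vec4 t s z w) = 0")
  case False
  then show ?thesis using conic by (intro p_vanishes) simp_all
next
  case True
  text \<open>The only such points are \<open>(\<plusminus>1, 1)\<close>; they are approached along secants through \<open>(1, -1)\<close>.\<close>
  define \<alpha> where "\<alpha> = w^3 - 1"
  define \<beta> where "\<beta> = z^3 - 1"
  have \<alpha>\<beta>: "\<alpha> \<noteq> 0" "\<beta> \<noteq> 0" "\<alpha> \<noteq> \<beta>" using assms(2-4) by (simp_all add: \<alpha>_def \<beta>_def)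
  have conic': "\<alpha> * (t^2 - 1) = \<beta> * (s^2 - 1)" using conic by (simp add: \<alpha>_def \<beta>_def)
  have "s = 1 \<and> t^2 = 1"
    using generic_conic_exceptional_points[OF conic' \<alpha>\<beta>] True by (simp add: \<alpha>_def \<beta>_def)
  then have s: "s = 1" and t: "t = 1 \<or> t = -1" by (auto simp: power2_eq_1_iff)
  have nontangent: "\<alpha> * (t - 1)^2 \<noteq> \<beta> * (s - -1)^2" using t s \<alpha>\<beta> by auto
  define m where "m = (t - 1) / (s - -1)"
  have secant: "\<alpha> * m^2 \<noteq> \<beta>" "secant_t \<alpha> \<beta> 1 (-1) m = t" "secant_s \<alpha> \<beta> 1 (-1) m = s"
    using secant_through_point[OF conic', of 1 "-1"] s nontangent by (simp_all add: m_def)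
  show ?thesis
    using vanishes_at_secant_from_1_neg1[of w z m, folded \<alpha>_def \<beta>_def, OF \<alpha>\<beta>(1,3) secant(1)]
    by (simp only: secant(2,3))
qed

text \<open>Deforming the fibre coordinates \<open>(z, w)\<close> while keeping the slope \<open>m\<close> moves the secant point
  into generic fibres; the factor \<open>K\<close> allows the fibre to be degenerate (\<open>\<alpha> = \<beta> = 0\<close>) in the limit.\<close>
lemma vanishes_at_deformed_secant:
  fixes Z W A B K :: "complex \<Rightarrow> complex"
  assumes "a^2 = 1" "b^2 = 1" and nontangent: "\<alpha> * m^2 \<noteq> \<beta>"
    and Z: "(Z \<longlongrightarrow> z) (at 0)" and W: "(W \<longlongrightarrow> w) (at 0)"
    and A: "(A \<longlongrightarrow> \<alpha>) (at 0)" and B: "(B \<longlongrightarrow> \<beta>) (at 0)"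
    and generic: "\<forall>\<^sub>F l in at 0. W l^3 - 1 = K l * A l \<and> Z l^3 - 1 = K l * B l \<and>
                                  K l \<noteq> 0 \<and> A l \<noteq> 0 \<and> B l \<noteq> 0 \<and> A l \<noteq> B l"
  shows "p (vec4 (secant_t \<alpha> \<beta> a b m) (secant_s \<alpha> \<beta> a b m) z w) = 0"
proof (rule vanishes_at_limit[OF tendsto_secant(1,2)[OF A B tendsto_const nontangent] Z W])
  have "((\<lambda>l. A l * m^2 - B l) \<longlongrightarrow> \<alpha> * m^2 - \<beta>) (at 0)" by (intro tendsto_intros A B)
  then have "\<forall>\<^sub>F l in at 0. A l * m^2 - B l \<noteq> 0"
    by (rule tendsto_imp_eventually_ne) (use nontangent in simp)
  with generic show "\<forall>\<^sub>F l in at 0.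
      p (vec4 (secant_t (A l) (B l) a b m) (secant_s (A l) (B l) a b m) (Z l) (W l)) = 0"
  proof eventually_elim
    case (elim l)
    have "A l * ((secant_t (A l) (B l) a b m)^2 - 1) = B l * ((secant_s (A l) (B l) a b m)^2 - 1)"
      using secant_on_conic[OF assms(1,2)] elim by simp
    then have "K l * A l * ((secant_t (A l) (B l) a b m)^2 - 1)
             = K l * B l * ((secant_s (A l) (B l) a b m)^2 - 1)"
      by (simp add: mult.assoc)
    moreover have "W l^3 - Z l^3 \<noteq> 0"
    proof -
      have "W l^3 - Z l^3 = (W l^3 - 1) - (Z l^3 - 1)" by simp
      also have "\<dots> = K l * (A l - B l)" using elim by (simp add: right_diff_distrib)
      also have "\<dots> \<noteq> 0" using elim by simp
      finally show ?thesis .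
    qed
    ultimately show ?case using elim by (intro vanishes_on_generic_fibres) simp_all
  qed
qed

lemma vanishes_on_nonzero_fibres_off_origin:
  assumes conic: "(w^3 - 1) * (t^2 - 1) = (z^3 - 1) * (s^2 - 1)" and fibre: "w^3 \<noteq> 1 \<or> z^3 \<noteq> 1"
    and "t \<noteq> 0 \<or> s \<noteq> 0"
  shows "p (vec4 t s z w) = 0"
proof -
  define \<alpha> where "\<alpha> = w^3 - 1"
  define \<beta> where "\<beta> = z^3 - 1"
  have conic': "\<alpha> * (t^2 - 1) = \<beta> * (s^2 - 1)" using conic by (simp add: \<alpha>_def \<beta>_def)
  obtain a b where ab: "a^2 = 1" "b^2 = 1" "s \<noteq> b" "\<alpha> * (t - a)^2 \<noteq> \<beta> * (s - b)^2"
    using exists_secant_base[OF conic'] fibre \<open>t \<noteq> 0 \<or> s \<noteq> 0\<close> by (auto simp: \<alpha>_def \<beta>_def)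
  define m where "m = (t - a) / (s - b)"
  note secant = secant_through_point[OF conic' ab, folded m_def]
  have "\<forall>\<^sub>F l in at 0. (w + 2 * l)^3 - (0 + 0 * l)^3 \<noteq> 1"
    "\<forall>\<^sub>F l in at 0. (z + 1 * l)^3 - (0 + 0 * l)^3 \<noteq> 1"
    "\<forall>\<^sub>F l in at 0. (w + 2 * l)^3 - (z + 1 * l)^3 \<noteq> 0"
    by (rule eventually_linear_powers_ne; simp)+
  then have generic: "\<forall>\<^sub>F l in at 0. (w + 2 * l)^3 - 1 = 1 * ((w + 2 * l)^3 - 1) \<and>
      (z + l)^3 - 1 = 1 * ((z + l)^3 - 1) \<and> (1::complex) \<noteq> 0 \<and> (w + 2 * l)^3 - 1 \<noteq> 0 \<and>
      (z + l)^3 - 1 \<noteq> 0 \<and> (w + 2 * l)^3 - 1 \<noteq> (z + l)^3 - 1"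
    by eventually_elim simp
  have lim: "((\<lambda>l. z + l) \<longlongrightarrow> z) (at 0)" "((\<lambda>l. w + 2 * l) \<longlongrightarrow> w) (at 0)"
    "((\<lambda>l. (w + 2 * l)^3 - 1) \<longlongrightarrow> \<alpha>) (at 0)" "((\<lambda>l. (z + l)^3 - 1) \<longlongrightarrow> \<beta>) (at 0)"
    unfolding \<alpha>_def \<beta>_def by (auto intro!: tendsto_eq_intros)
  have "p (vec4 (secant_t \<alpha> \<beta> a b m) (secant_s \<alpha> \<beta> a b m) z w) = 0"
    by (rule vanishes_at_deformed_secant[OF ab(1,2) secant(1) lim generic])
  then show ?thesis using secant(2,3) by simp
qed

lemma vanishes_on_nonzero_fibres:
  assumes conic: "(w^3 - 1) * (t^2 - 1) = (z^3 - 1) * (s^2 - 1)" and fibre: "w^3 \<noteq> 1 \<or> z^3 \<noteq> 1"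
  shows "p (vec4 t s z w) = 0"
proof (cases "t = 0 \<and> s = 0")
  case False
  with assms show ?thesis by (intro vanishes_on_nonzero_fibres_off_origin) auto
next
  case True
  text \<open>Through the origin the conic has \<open>\<alpha> = \<beta>\<close>, so it contains the diagonal.\<close>
  with conic have "w^3 = z^3" by simp
  have "p (vec4 0 0 z w) = 0"
  proof (rule vanishes_at_limit[OF tendsto_ident_at tendsto_ident_at tendsto_const tendsto_const])
    show "\<forall>\<^sub>F l in at 0. p (vec4 l l z w) = 0"
      using eventually_neq_at_within[of 0 0 UNIV]
      by eventually_elim (rule vanishes_on_nonzero_fibres_off_origin, use fibre \<open>w^3 = z^3\<close> in auto)
  qed
  with True show ?thesis by simp
qed

lemma vanishes_on_zero_fibres_generic:
  assumes z: "z^3 = 1" and w: "w^3 = 1" and "t^2 \<noteq> 1" "s^2 \<noteq> 1" "t^2 \<noteq> s^2"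
  shows "p (vec4 t s z w) = 0"
proof -
  text \<open>\<open>(t, s)\<close> lies on the conic \<open>\<alpha>(t\<^sup>2 - 1) = \<beta>(s\<^sup>2 - 1)\<close> with \<open>\<alpha> = s\<^sup>2 - 1\<close>, \<open>\<beta> = t\<^sup>2 - 1\<close>;
    the deformation \<open>w(1 + \<alpha> l/3)\<close>, \<open>z(1 + \<beta> l/3)\<close> of the fibre is asymptotically that conic.\<close>
  define \<alpha> where "\<alpha> = s^2 - 1"
  define \<beta> where "\<beta> = t^2 - 1"
  have \<alpha>\<beta>: "\<alpha> \<noteq> 0" "\<beta> \<noteq> 0" "\<alpha> \<noteq> \<beta>" using assms(3-5) by (auto simp: \<alpha>_def \<beta>_def)
  have conic: "\<alpha> * (t^2 - 1) = \<beta> * (s^2 - 1)" by (simp add: \<alpha>_def \<beta>_def)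
  obtain a b where ab: "a^2 = 1" "b^2 = 1" "s \<noteq> b" "\<alpha> * (t - a)^2 \<noteq> \<beta> * (s - b)^2"
    using exists_secant_base[OF conic] \<alpha>\<beta> assms(5) by force
  define m where "m = (t - a) / (s - b)"
  note secant = secant_through_point[OF conic ab, folded m_def]
  define A where "A l = \<alpha> + \<alpha>^2 * l / 3 + \<alpha>^3 * l^2 / 27" for l :: complex
  define B where "B l = \<beta> + \<beta>^2 * l / 3 + \<beta>^3 * l^2 / 27" for l :: complex
  have AB: "(A \<longlongrightarrow> \<alpha>) (at 0)" "(B \<longlongrightarrow> \<beta>) (at 0)" "((\<lambda>l. A l - B l) \<longlongrightarrow> \<alpha> - \<beta>) (at 0)"
    unfolding A_def B_def by (auto intro!: tendsto_eq_intros)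
  have "\<alpha> - \<beta> \<noteq> 0" using \<alpha>\<beta> by simp
  have generic: "\<forall>\<^sub>F l in at 0. (w * (1 + \<alpha> * l / 3))^3 - 1 = l * A l \<and> (z * (1 + \<beta> * l / 3))^3 - 1 = l * B l \<and>
          l \<noteq> 0 \<and> A l \<noteq> 0 \<and> B l \<noteq> 0 \<and> A l \<noteq> B l"
    using eventually_neq_at_within[of 0 0 UNIV] tendsto_imp_eventually_ne[OF AB(1) \<alpha>\<beta>(1)]
      tendsto_imp_eventually_ne[OF AB(2) \<alpha>\<beta>(2)] tendsto_imp_eventually_ne[OF AB(3) \<open>\<alpha> - \<beta> \<noteq> 0\<close>]
    by eventually_elim (use \<alpha>\<beta> in \<open>simp_all add: cube_root_of_unity_deformation z w A_def B_def\<close>)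
  have lim: "((\<lambda>l. z * (1 + \<beta> * l / 3)) \<longlongrightarrow> z) (at 0)" "((\<lambda>l. w * (1 + \<alpha> * l / 3)) \<longlongrightarrow> w) (at 0)"
    by (auto intro!: tendsto_eq_intros)
  have "p (vec4 (secant_t \<alpha> \<beta> a b m) (secant_s \<alpha> \<beta> a b m) z w) = 0"
    by (rule vanishes_at_deformed_secant[OF ab(1,2) secant(1) lim AB(1,2) generic])
  then show ?thesis using secant(2,3) by simp
qed

lemma vanishes_on_zero_fibres:
  assumes z: "z^3 = 1" and w: "w^3 = 1"
  shows "p (vec4 t s z w) = 0"
proof (rule vanishes_at_limit)
  show "((\<lambda>l. t + l) \<longlongrightarrow> t) (at 0)" "((\<lambda>l. s + 2 * l) \<longlongrightarrow> s) (at 0)"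
    by (auto intro!: tendsto_eq_intros)
  have "\<forall>\<^sub>F l in at 0. (t + 1 * l)^2 - (0 + 0 * l)^2 \<noteq> 1"
    "\<forall>\<^sub>F l in at 0. (s + 2 * l)^2 - (0 + 0 * l)^2 \<noteq> 1"
    "\<forall>\<^sub>F l in at 0. (t + 1 * l)^2 - (s + 2 * l)^2 \<noteq> 0"
    by (rule eventually_linear_powers_ne; simp)+
  then show "\<forall>\<^sub>F l in at 0. p (vec4 (t + l) (s + 2 * l) z w) = 0"
    by eventually_elim (rule vanishes_on_zero_fibres_generic[OF z w]; simp)
qed (rule tendsto_const)+

lemma vanishes_on_hypersurface_Q:
  assumes "x \<in> hypersurface_Q"
  shows "p x = 0"
proof -
  have "p (vec4 (x$1) (x$2) (x$3) (x$4)) = 0"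
  proof (cases "x$4^3 = 1 \<and> x$3^3 = 1")
    case True
    then show ?thesis by (intro vanishes_on_zero_fibres) simp_all
  next
    case False
    then show ?thesis using assms by (intro vanishes_on_nonzero_fibres) (auto simp: hypersurface_Q_def)
  qed
  then show ?thesis by (simp add: vec4_eta)
qed

end

lemma zariski_dense_psi_nondeg:
  "zariski_dense_in {x \<in> hypersurface_Q. psi_nondeg x \<noteq> 0} hypersurface_Q"
  unfolding zariski_dense_in_def
  using vanishes_on_hypersurface_Q[OF affpoly_continuous_on] by blast

theorem proposition2p6:
  "birational_to_affine
     {x :: complex^4. ((x$4)^3 - 1) * ((x$1)^2 - 1) = ((x$3)^3 - 1) * ((x$2)^2 - 1)}
     TYPE(3)"
proof -
  have "phi_nondeg 0 \<noteq> 0" by (simp add: phi_nondeg_def)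
  then show ?thesis
    unfolding hypersurface_Q_def[symmetric] birational_to_affine_def
    using phi_psi_affpoly zariski_dense_psi_nondeg psi_phi_id phi_psi_id by blast
qed

end
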